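(* Let $G$ be a reduced torsion-free abelian group. Then the following are equivalent: (i) $G$ is semi-generalized Bassian; (ii) $G$ is Bassian; (iii) $G$ has finite rank.
   Context: All groups are additively written abelian groups. A subgroup $H$ of a group $A$ is essential in $A$ if $H \cap S \neq \{0\}$ for every non-zero subgroup $S$ of $A$. A group $G$ is Bassian if the existence of an injective homomorphism $G\to G/N$ for a subgroup $N\le G$ forces $N=\{0\}$. $G$ is semi-generalized Bassian if, for every subgroup $H \le G$, the existence of an injective homomorphism $G \to G/H$ implies that $H$ is an essential subgroup of some direct summand of $G$. *)

theory Defs
  imports Main
begin

text \<open>Abelian groups are modelled as types of class ab_group_add; the group G is the
whole type. Subgroups are subsets, the quotient G/N is the set of cosets of N.\<close>

definition zmul :: "int \<Rightarrow> 'a::ab_group_add \<Rightarrow> 'a" where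
  "zmul k x = (if k \<ge> 0 then ((\<lambda>y. x + y) ^^ nat k) 0 else - (((\<lambda>y. x + y) ^^ nat (- k)) 0))"

definition subgrp :: "'a::ab_group_add set \<Rightarrow> bool" where
  "subgrp H \<longleftrightarrow> 0 \<in> H \<and> (\<forall>x\<in>H. \<forall>y\<in>H. x + y \<in> H) \<and> (\<forall>x\<in>H. - x \<in> H)"

definition cosets :: "'a::ab_group_add set \<Rightarrow> 'a set set" where
  "cosets N = {(\<lambda>n. x + n) ` N | x. True}"

definition coset_add :: "'a::ab_group_add set \<Rightarrow> 'a set \<Rightarrow> 'a set" where
  "coset_add A B = {a + b | a b. a \<in> A \<and> b \<in> B}"

definition inj_hom_to_quot :: "('a::ab_group_add \<Rightarrow> 'a set) \<Rightarrow> 'a set \<Rightarrow> bool" where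
  "inj_hom_to_quot f N \<longleftrightarrow> (\<forall>x. f x \<in> cosets N) \<and>
      (\<forall>x y. f (x + y) = coset_add (f x) (f y)) \<and> inj f"

definition essential_in :: "'a::ab_group_add set \<Rightarrow> 'a set \<Rightarrow> bool" where
  "essential_in H A \<longleftrightarrow> subgrp H \<and> H \<subseteq> A \<and>
      (\<forall>S. subgrp S \<and> S \<subseteq> A \<and> S \<noteq> {0} \<longrightarrow> H \<inter> S \<noteq> {0})"

definition direct_summand :: "'a::ab_group_add set \<Rightarrow> bool" where
  "direct_summand S \<longleftrightarrow> subgrp S \<and> (\<exists>T. subgrp T \<and> S \<inter> T = {0} \<and>
      (\<forall>g. \<exists>s\<in>S. \<exists>t\<in>T. g = s + t))"

definition bassian :: "'a::ab_group_add itself \<Rightarrow> bool" where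
  "bassian _ \<longleftrightarrow> (\<forall>N::'a set. subgrp N \<and> (\<exists>f. inj_hom_to_quot f N) \<longrightarrow> N = {0})"

definition semi_gen_bassian :: "'a::ab_group_add itself \<Rightarrow> bool" where
  "semi_gen_bassian _ \<longleftrightarrow> (\<forall>H::'a set. subgrp H \<and> (\<exists>f. inj_hom_to_quot f H) \<longrightarrow>
      (\<exists>S. direct_summand S \<and> essential_in H S))"

definition torsion_free :: "'a::ab_group_add itself \<Rightarrow> bool" where
  "torsion_free _ \<longleftrightarrow> (\<forall>(x::'a) (n::nat). x \<noteq> 0 \<and> n > 0 \<longrightarrow> zmul (int n) x \<noteq> 0)"

definition divisible_subgrp :: "'a::ab_group_add set \<Rightarrow> bool" where
  "divisible_subgrp D \<longleftrightarrow> subgrp D \<and> (\<forall>x\<in>D. \<forall>n::nat. n > 0 \<longrightarrow> (\<exists>y\<in>D. zmul (int n) y = x))"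

definition reduced :: "'a::ab_group_add itself \<Rightarrow> bool" where
  "reduced _ \<longleftrightarrow> (\<forall>D::'a set. divisible_subgrp D \<longrightarrow> D = {0})"

definition z_independent :: "'a::ab_group_add set \<Rightarrow> bool" where
  "z_independent S \<longleftrightarrow> (\<forall>F c. finite F \<and> F \<subseteq> S \<and> (\<Sum>x\<in>F. zmul (c x) x) = 0 \<longrightarrow>
      (\<forall>x\<in>F. c x = 0))"

definition finite_rank :: "'a::ab_group_add itself \<Rightarrow> bool" where
  "finite_rank _ \<longleftrightarrow> (\<exists>S::'a set. finite S \<and> z_independent S \<and>
      (\<forall>T. S \<subseteq> T \<and> z_independent T \<longrightarrow> T = S))"

end

(* A torsion-free group G of finite rank n is Bassian: if r picks representatives for an
   embedding of G into G/N and 0 <> z lies in N, then z together with the image under r of a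
   maximal independent set is independent, giving n + 1 independent elements.

   Conversely, let X be an infinite maximal independent set. Splitting X into countably many
   disjoint copies of itself and sending the k-th copy of b to e_b/(k+1) maps the free group <X>
   onto the rational vector space with basis X, which contains G as its divisible hull. With N
   the kernel, G embeds into <X>/N, a subgroup of G/N. If N were essential in a direct summand S,
   the projection onto a complement of S would map the divisible group <X>/N into the reduced
   group G, hence to 0; so <X> would lie in S and N would be essential in <X>, which is
   impossible because <X>/N is torsion-free and non-zero. Bassian groups are trivially
   semi-generalized Bassian. *)

theory Submission
  imports Defs HOL.Rat
begin

section \<open>Integer multiples\<close>

lemma zmul_of_nat: "zmul (int n) x = ((+) x ^^ n) 0"
  by (simp add: zmul_def)

lemma zmul_minus_of_nat: "zmul (- int n) x = - ((+) x ^^ n) 0"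
  by (cases "n = 0") (simp_all add: zmul_def)

lemma zmul_0_left [simp]: "zmul 0 x = 0"
  by (simp add: zmul_def)

lemma zmul_1_left [simp]: "zmul 1 x = x"
  by (simp add: zmul_def)

lemma zmul_0_right [simp]: "zmul k 0 = 0"
proof -
  have "((+) (0::'a) ^^ n) 0 = 0" for n
    by (induction n) auto
  then show ?thesis
    by (cases k rule: int_cases2) (simp_all add: zmul_of_nat zmul_minus_of_nat)
qed

lemma zmul_add1: "zmul (k + 1) x = zmul k x + x"
proof (cases k rule: int_cases2)
  case (nonneg n)
  then show ?thesis
    using zmul_of_nat[of "Suc n" x] zmul_of_nat[of n x] by (simp add: add.commute)
next
  case (nonpos n)
  then show ?thesis
  proof (cases n)
    case (Suc m)
    then have "k + 1 = - int m"
      using nonpos by simp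
    then show ?thesis
      using nonpos Suc zmul_minus_of_nat[of m x] zmul_minus_of_nat[of "Suc m" x] by simp
  qed simp
qed

lemma zmul_add_left: "zmul (k + l) x = zmul k x + zmul l x"
proof (induction l rule: int_induct[where k = 0])
  case (step1 i)
  then show ?case
    using zmul_add1[of "k + i" x] zmul_add1[of i x] by (simp add: algebra_simps)
next
  case (step2 i)
  then show ?case
    using zmul_add1[of "k + i - 1" x] zmul_add1[of "i - 1" x] by (simp add: algebra_simps)
qed simp

lemma zmul_minus_left: "zmul (- k) x = - zmul k x"
  using zmul_add_left[of k "- k" x] by (simp add: eq_neg_iff_add_eq_0 add.commute)

lemma zmul_diff_left: "zmul (k - l) x = zmul k x - zmul l x"
  using zmul_add_left[of k "- l" x] zmul_minus_left[of l x] by simp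

lemma zmul_add_right: "zmul k (x + y) = zmul k x + zmul k y"
proof -
  have "((+) (x + y) ^^ n) 0 = ((+) x ^^ n) 0 + ((+) y ^^ n) 0" for n
    by (induction n) (simp_all add: algebra_simps)
  then show ?thesis
    by (cases k rule: int_cases2) (simp_all add: zmul_of_nat zmul_minus_of_nat)
qed

lemma zmul_minus_right: "zmul k (- x) = - zmul k x"
  using zmul_add_right[of k x "- x"] by (simp add: minus_unique)

lemma zmul_diff_right: "zmul k (x - y) = zmul k x - zmul k y"
  using zmul_add_right[of k x "- y"] zmul_minus_right[of k y] by simp

lemma zmul_mult: "zmul (k * l) x = zmul k (zmul l x)"
  by (induction k rule: int_induct[where k = 0])
    (simp_all add: algebra_simps zmul_add_left zmul_diff_left)

lemma zmul_sum_right: "zmul k (sum f A) = (\<Sum>a\<in>A. zmul k (f a))"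
  by (induction A rule: infinite_finite_induct) (simp_all add: zmul_add_right)

lemma additive_zmul:
  assumes "\<And>x y. h (x + y) = h x + h y"
  shows "h (zmul k x) = zmul k (h x)"
proof -
  have "h 0 = 0"
    using assms[of 0 0] by simp
  moreover have "h (a - b) = h a - h b" for a b
    using assms[of "a - b" b] by simp
  ultimately show ?thesis
    by (induction k rule: int_induct[where k = 0]) (simp_all add: assms zmul_add1 zmul_diff_left)
qed

lemma torsion_free_zmul_eq_0:
  assumes "torsion_free TYPE('a::ab_group_add)" "k \<noteq> 0" "zmul k (x::'a) = 0"
  shows "x = 0"
proof -
  obtain n where "n > 0" "k = int n \<or> k = - int n"
    using assms(2) by (metis int_cases2 neq0_conv of_nat_0 minus_zero)
  moreover from this have "zmul (int n) x = 0"
    using assms(3) by (auto simp: zmul_minus_left)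
  ultimately show ?thesis
    using assms(1) unfolding torsion_free_def by blast
qed

section \<open>Subgroups, cosets and homomorphisms into quotients\<close>

lemma subgrp_0: "subgrp N \<Longrightarrow> 0 \<in> N"
  by (simp add: subgrp_def)

lemma subgrp_add: "subgrp N \<Longrightarrow> x \<in> N \<Longrightarrow> y \<in> N \<Longrightarrow> x + y \<in> N"
  by (simp add: subgrp_def)

lemma subgrp_minus: "subgrp N \<Longrightarrow> x \<in> N \<Longrightarrow> - x \<in> N"
  by (simp add: subgrp_def)

lemma subgrp_diff: "subgrp N \<Longrightarrow> x \<in> N \<Longrightarrow> y \<in> N \<Longrightarrow> x - y \<in> N"
  using subgrp_add[of N x "- y"] subgrp_minus by fastforce

lemma subgrp_zmul: "subgrp N \<Longrightarrow> x \<in> N \<Longrightarrow> zmul k x \<in> N"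
  by (induction k rule: int_induct[where k = 0])
    (simp_all add: subgrp_0 subgrp_add subgrp_diff zmul_add1 zmul_diff_left)

lemma subgrp_sum: "subgrp N \<Longrightarrow> (\<And>a. a \<in> A \<Longrightarrow> g a \<in> N) \<Longrightarrow> sum g A \<in> N"
  by (induction A rule: infinite_finite_induct) (auto simp: subgrp_0 subgrp_add)

lemma subgrp_zmul_range: "subgrp (range (\<lambda>k. zmul k y))"
proof -
  have "zmul k y + zmul l y \<in> range (\<lambda>k. zmul k y)" "- zmul k y \<in> range (\<lambda>k. zmul k y)" for k l
    by (metis rangeI zmul_add_left, metis rangeI zmul_minus_left)
  then show ?thesis
    unfolding subgrp_def by (auto intro: range_eqI[of _ _ 0])
qed

lemma coset_eq_iff:
  assumes "subgrp N"
  shows "(+) a ` N = (+) b ` N \<longleftrightarrow> a - b \<in> N"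
proof
  assume "(+) a ` N = (+) b ` N"
  then have "a + 0 \<in> (+) b ` N"
    using subgrp_0[OF assms] by blast
  then show "a - b \<in> N"
    by auto
next
  assume ab: "a - b \<in> N"
  show "(+) a ` N = (+) b ` N"
  proof safe
    fix n assume "n \<in> N"
    then show "a + n \<in> (+) b ` N"
      using subgrp_add[OF assms ab] by (intro image_eqI[of _ _ "(a - b) + n"]) auto
  next
    fix n assume "n \<in> N"
    then show "b + n \<in> (+) a ` N"
      using subgrp_diff[OF assms _ ab] by (intro image_eqI[of _ _ "n - (a - b)"]) auto
  qed
qed

lemma coset_add_cosets:
  assumes "subgrp N"
  shows "coset_add ((+) a ` N) ((+) b ` N) = (+) (a + b) ` N"
proof safe
  fix x assume "x \<in> coset_add ((+) a ` N) ((+) b ` N)"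
  then obtain n m where "n \<in> N" "m \<in> N" "x = (a + n) + (b + m)"
    unfolding coset_add_def by auto
  then show "x \<in> (+) (a + b) ` N"
    using subgrp_add[OF assms] by (intro image_eqI[of _ _ "n + m"]) (auto simp: algebra_simps)
next
  fix n assume "n \<in> N"
  then show "a + b + n \<in> coset_add ((+) a ` N) ((+) b ` N)"
    unfolding coset_add_def using subgrp_0[OF assms]
    by (intro CollectI exI[of _ "a + n"] exI[of _ "b + 0"]) (auto simp: algebra_simps)
qed

text \<open>A homomorphism \<open>G \<rightarrow> G/N\<close> is the same as a map \<open>r\<close> choosing representatives of the
  image cosets; \<open>r\<close> is then additive up to elements of \<open>N\<close>.\<close>

definition additive_mod :: "'a::ab_group_add set \<Rightarrow> ('a \<Rightarrow> 'a) \<Rightarrow> bool" where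
  "additive_mod N r \<longleftrightarrow> (\<forall>x y. r (x + y) - (r x + r y) \<in> N)"

lemma additive_mod_0:
  assumes "subgrp N" "additive_mod N r"
  shows "r 0 \<in> N"
proof -
  have "r (0 + 0) - (r 0 + r 0) \<in> N"
    using assms(2) unfolding additive_mod_def by blast
  then show ?thesis
    using subgrp_minus[OF assms(1)] by fastforce
qed

lemma additive_mod_zmul:
  assumes N: "subgrp N" and r: "additive_mod N r"
  shows "r (zmul k x) - zmul k (r x) \<in> N"
proof (induction k rule: int_induct[where k = 0])
  case base
  then show ?case
    using additive_mod_0[OF N r] by simp
next
  case (step1 i)
  have "r (zmul (i + 1) x) - zmul (i + 1) (r x) =
      (r (zmul i x + x) - (r (zmul i x) + r x)) + (r (zmul i x) - zmul i (r x))"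
    by (simp add: zmul_add1)
  then show ?case
    using step1 r N subgrp_add unfolding additive_mod_def by metis
next
  case (step2 i)
  have "r (zmul (i - 1) x) - zmul (i - 1) (r x) =
      (r (zmul i x) - zmul i (r x)) - (r (zmul (i - 1) x + x) - (r (zmul (i - 1) x) + r x))"
    by (simp add: zmul_diff_left algebra_simps)
  then show ?case
    using step2 r N subgrp_diff unfolding additive_mod_def by metis
qed

lemma additive_mod_sum:
  assumes N: "subgrp N" and r: "additive_mod N r"
  shows "r (\<Sum>a\<in>A. g a) - (\<Sum>a\<in>A. r (g a)) \<in> N"
proof (induction A rule: infinite_finite_induct)
  case (insert a A)
  have "r (\<Sum>a\<in>insert a A. g a) - (\<Sum>a\<in>insert a A. r (g a)) =
      (r (g a + (\<Sum>a\<in>A. g a)) - (r (g a) + r (\<Sum>a\<in>A. g a))) + (r (\<Sum>a\<in>A. g a) - (\<Sum>a\<in>A. r (g a)))"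
    using insert by simp
  then show ?case
    using insert r N subgrp_add unfolding additive_mod_def by metis
qed (use additive_mod_0[OF N r] in simp_all)

lemma additive_mod_eq_imp_eq:
  assumes N: "subgrp N" and r: "additive_mod N r" and ker: "\<forall>x. r x \<in> N \<longrightarrow> x = 0"
    and "r x - r y \<in> N"
  shows "x = y"
proof -
  have "r ((x - y) + y) - (r (x - y) + r y) \<in> N"
    using r unfolding additive_mod_def by blast
  then have "(r x - r y) - (r ((x - y) + y) - (r (x - y) + r y)) \<in> N"
    using subgrp_diff[OF N] assms(4) by blast
  then have "r (x - y) \<in> N"
    by simp
  then have "x - y = 0"
    using ker by blast
  then show ?thesis
    by simp
qed

lemma additive_mod_inj:
  assumes N: "subgrp N" and r: "additive_mod N r" and ker: "\<forall>x. r x \<in> N \<longrightarrow> x = 0"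
  shows "inj r"
proof (rule injI)
  fix x y
  assume "r x = r y"
  then have "r x - r y \<in> N"
    using subgrp_0[OF N] by simp
  then show "x = y"
    by (rule additive_mod_eq_imp_eq[OF N r ker])
qed

lemma ex_inj_hom_to_quot_iff:
  assumes N: "subgrp N"
  shows "(\<exists>f. inj_hom_to_quot f N) \<longleftrightarrow> (\<exists>r. additive_mod N r \<and> (\<forall>x. r x \<in> N \<longrightarrow> x = 0))"
proof
  assume "\<exists>f. inj_hom_to_quot f N"
  then obtain f where f: "inj_hom_to_quot f N"
    by blast
  have fa: "f (x + y) = coset_add (f x) (f y)" and fi: "inj f" for x y
    using f unfolding inj_hom_to_quot_def by simp_all
  have "\<forall>x. \<exists>a. f x = (+) a ` N"
    using f by (simp add: inj_hom_to_quot_def cosets_def)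
  then obtain r where r: "\<And>x. f x = (+) (r x) ` N"
    by metis
  have add: "additive_mod N r"
    unfolding additive_mod_def using fa by (simp add: r coset_add_cosets[OF N] coset_eq_iff[OF N])
  have "x = 0" if "r x \<in> N" for x
  proof -
    have "f x = f 0"
      using that additive_mod_0[OF N add] by (simp add: r coset_eq_iff[OF N] subgrp_diff[OF N])
    with fi show ?thesis
      by (rule injD)
  qed
  with add show "\<exists>r. additive_mod N r \<and> (\<forall>x. r x \<in> N \<longrightarrow> x = 0)"
    by blast
next
  assume "\<exists>r. additive_mod N r \<and> (\<forall>x. r x \<in> N \<longrightarrow> x = 0)"
  then obtain r where add: "additive_mod N r" and ker: "\<forall>x. r x \<in> N \<longrightarrow> x = 0"
    by blast
  have "inj_hom_to_quot (\<lambda>x. (+) (r x) ` N) N"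
    unfolding inj_hom_to_quot_def
  proof (intro conjI allI injI)
    fix x y
    show "(+) (r x) ` N \<in> cosets N"
      unfolding cosets_def by auto
    have "r (x + y) - (r x + r y) \<in> N"
      using add unfolding additive_mod_def by blast
    then show "(+) (r (x + y)) ` N = coset_add ((+) (r x) ` N) ((+) (r y) ` N)"
      by (simp add: coset_add_cosets[OF N] coset_eq_iff[OF N])
  next
    fix x y assume "(+) (r x) ` N = (+) (r y) ` N"
    then show "x = y"
      by (intro additive_mod_eq_imp_eq[OF N add ker]) (simp add: coset_eq_iff[OF N])
  qed
  then show "\<exists>f. inj_hom_to_quot f N"
    by blast
qed

lemma direct_summand_projection:
  assumes "direct_summand S"
  obtains p where "\<And>x y. p (x + y) = p x + p y" "\<And>s. s \<in> S \<Longrightarrow> p s = 0" "\<And>x. x - p x \<in> S"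
proof -
  from assms obtain T where S: "subgrp S" and T: "subgrp T" and ST: "S \<inter> T = {0}"
    and dec: "\<forall>g. \<exists>s\<in>S. \<exists>t\<in>T. g = s + t"
    unfolding direct_summand_def by blast
  define p where "p g = (SOME t. t \<in> T \<and> g - t \<in> S)" for g
  have p: "p g \<in> T \<and> g - p g \<in> S" for g
  proof -
    obtain s t where "s \<in> S" "t \<in> T" "g = s + t"
      using dec by blast
    then have "\<exists>t. t \<in> T \<and> g - t \<in> S"
      by (intro exI[of _ t]) simp
    then show ?thesis
      unfolding p_def by (rule someI_ex)
  qed
  have p_unique: "p g = t" if "t \<in> T" "g - t \<in> S" for g t
  proof -
    have "p g - t \<in> T"
      using subgrp_diff[OF T] p that by blast
    moreover have "(g - t) - (g - p g) \<in> S"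
      using subgrp_diff[OF S] p that by blast
    ultimately have "p g - t \<in> S \<inter> T"
      by simp
    then show ?thesis
      using ST by simp
  qed
  show thesis
  proof
    show "p (x + y) = p x + p y" for x y
    proof (rule p_unique)
      show "p x + p y \<in> T"
        using subgrp_add[OF T] p by blast
      have "(x - p x) + (y - p y) \<in> S"
        using subgrp_add[OF S] p by blast
      then show "x + y - (p x + p y) \<in> S"
        by (simp add: algebra_simps)
    qed
    show "p s = 0" if "s \<in> S" for s
      using p_unique[of 0 s] subgrp_0[OF T] that by simp
    show "x - p x \<in> S" for x
      using p by blast
  qed
qed

section \<open>Integer linear combinations and independence\<close>

definition supp :: "('a \<Rightarrow> 'b::zero) \<Rightarrow> 'a set" where
  "supp c = {x. c x \<noteq> 0}"

definition fin_supp_on :: "'a set \<Rightarrow> ('a \<Rightarrow> 'b::zero) set" where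
  "fin_supp_on X = {c. finite (supp c) \<and> supp c \<subseteq> X}"

definition lincomb :: "('a::ab_group_add \<Rightarrow> int) \<Rightarrow> 'a" where
  "lincomb c = (\<Sum>x\<in>supp c. zmul (c x) x)"

lemma supp_add_subset: "supp (\<lambda>x. c x + d x) \<subseteq> supp c \<union> supp (d :: 'a \<Rightarrow> 'b::monoid_add)"
  by (auto simp: supp_def)

lemma supp_diff_subset: "supp (\<lambda>x. c x - d x) \<subseteq> supp c \<union> supp (d :: 'a \<Rightarrow> 'b::group_add)"
  by (auto simp: supp_def)

lemma supp_mult_subset: "supp (\<lambda>x. k * c x) \<subseteq> supp (c :: 'a \<Rightarrow> 'b::mult_zero)"
  by (auto simp: supp_def)

lemma fin_supp_on_0 [simp]: "(\<lambda>x. 0) \<in> fin_supp_on X"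
  by (simp add: fin_supp_on_def supp_def)

lemma fin_supp_on_add:
  "c \<in> fin_supp_on X \<Longrightarrow> d \<in> fin_supp_on X \<Longrightarrow> (\<lambda>x. c x + d x :: 'b::monoid_add) \<in> fin_supp_on X"
  using supp_add_subset[of c d] by (auto simp: fin_supp_on_def intro: finite_subset)

lemma fin_supp_on_diff:
  "c \<in> fin_supp_on X \<Longrightarrow> d \<in> fin_supp_on X \<Longrightarrow> (\<lambda>x. c x - d x :: 'b::group_add) \<in> fin_supp_on X"
  using supp_diff_subset[of c d] by (auto simp: fin_supp_on_def intro: finite_subset)

lemma fin_supp_on_mult: "c \<in> fin_supp_on X \<Longrightarrow> (\<lambda>x. k * c x :: 'b::mult_zero) \<in> fin_supp_on X"
  using supp_mult_subset[of k c] by (auto simp: fin_supp_on_def intro: finite_subset)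

lemma fin_supp_on_uminus: "c \<in> fin_supp_on X \<Longrightarrow> (\<lambda>x. - c x :: 'b::group_add) \<in> fin_supp_on X"
  by (simp add: fin_supp_on_def supp_def)

lemma lincomb_eq_sum:
  assumes "finite F" "supp c \<subseteq> F"
  shows "lincomb c = (\<Sum>x\<in>F. zmul (c x) x)"
  unfolding lincomb_def by (rule sum.mono_neutral_left) (use assms in \<open>auto simp: supp_def\<close>)

lemma lincomb_0 [simp]: "lincomb (\<lambda>x. 0) = 0"
  by (simp add: lincomb_def supp_def)

lemma lincomb_add:
  assumes "finite (supp c)" "finite (supp d)"
  shows "lincomb (\<lambda>x. c x + d x) = lincomb c + lincomb d"
proof -
  let ?F = "supp c \<union> supp d"
  have "lincomb (\<lambda>x. c x + d x) = (\<Sum>x\<in>?F. zmul (c x + d x) x)"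
    using assms supp_add_subset[of c d] by (intro lincomb_eq_sum) auto
  also have "\<dots> = (\<Sum>x\<in>?F. zmul (c x) x) + (\<Sum>x\<in>?F. zmul (d x) x)"
    by (simp add: zmul_add_left sum.distrib)
  finally show ?thesis
    using assms by (simp add: lincomb_eq_sum[of ?F c] lincomb_eq_sum[of ?F d])
qed

lemma lincomb_mult:
  assumes "finite (supp c)"
  shows "lincomb (\<lambda>x. k * c x) = zmul k (lincomb c)"
proof -
  have "lincomb (\<lambda>x. k * c x) = (\<Sum>x\<in>supp c. zmul (k * c x) x)"
    using assms supp_mult_subset[of k c] by (intro lincomb_eq_sum) auto
  then show ?thesis
    by (simp add: lincomb_def zmul_mult zmul_sum_right)
qed

lemma lincomb_diff:
  assumes "finite (supp c)" "finite (supp d)"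
  shows "lincomb (\<lambda>x. c x - d x) = lincomb c - lincomb d"
proof -
  have "finite (supp (\<lambda>x. - 1 * d x))"
    using assms(2) supp_mult_subset[of "- 1" d] by (blast intro: finite_subset)
  then show ?thesis
    using lincomb_add[of c "\<lambda>x. - 1 * d x"] lincomb_mult[of d "- 1"] assms
    by (simp add: zmul_minus_left)
qed

lemma lincomb_sum:
  assumes "finite T" "\<And>t. t \<in> T \<Longrightarrow> finite (supp (f t))"
  shows "lincomb (\<lambda>x. \<Sum>t\<in>T. f t x) = (\<Sum>t\<in>T. lincomb (f t))"
  using assms
proof (induction T rule: finite_induct)
  case (insert t T)
  have "supp (\<lambda>x. \<Sum>t\<in>T. f t x) \<subseteq> (\<Union>t\<in>T. supp (f t))"
    by (auto simp: supp_def intro: ccontr)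
  then have "finite (supp (\<lambda>x. \<Sum>t\<in>T. f t x))"
    using insert by (blast intro: finite_subset)
  then show ?case
    using insert lincomb_add[of "f t" "\<lambda>x. \<Sum>t\<in>T. f t x"] by simp
qed simp

lemma z_independentD:
  assumes "z_independent X" "finite F" "F \<subseteq> X" "(\<Sum>x\<in>F. zmul (c x) x) = 0" "x \<in> F"
  shows "c x = 0"
  using assms unfolding z_independent_def by blast

lemma z_independent_not_0: "z_independent X \<Longrightarrow> 0 \<notin> X"
  using z_independentD[of X "{0}" "\<lambda>_. 1" 0] by auto

lemma z_independent_lincomb_inj:
  assumes "z_independent X" "c \<in> fin_supp_on X" "d \<in> fin_supp_on X" "lincomb c = lincomb d"
  shows "c = d"
proof
  fix x
  let ?e = "\<lambda>x. c x - d x"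
  have e: "?e \<in> fin_supp_on X" "lincomb ?e = 0"
    using fin_supp_on_diff[OF assms(2,3)] assms(2-4) by (simp_all add: lincomb_diff fin_supp_on_def)
  show "c x = d x"
  proof (cases "x \<in> supp ?e")
    case True
    then have "?e x = 0"
      using e assms(1) by (intro z_independentD[of X "supp ?e"]) (auto simp: fin_supp_on_def lincomb_def)
    then show ?thesis by simp
  qed (simp add: supp_def)
qed

definition maximal_independent :: "'a::ab_group_add set \<Rightarrow> bool" where
  "maximal_independent X \<longleftrightarrow> z_independent X \<and> (\<forall>T. X \<subseteq> T \<and> z_independent T \<longrightarrow> T = X)"

lemma finite_rank_iff: "finite_rank TYPE('a::ab_group_add) \<longleftrightarrow> (\<exists>X::'a set. finite X \<and> maximal_independent X)"
  by (auto simp: finite_rank_def maximal_independent_def)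

lemma ex_maximal_independent: "\<exists>X::'a::ab_group_add set. maximal_independent X"
proof -
  let ?A = "{X::'a set. z_independent X}"
  have "\<Union>C \<in> ?A" if C: "C \<in> chains ?A" for C
    unfolding mem_Collect_eq z_independent_def
  proof (intro allI impI)
    fix F c assume F: "finite F \<and> F \<subseteq> \<Union>C \<and> (\<Sum>x\<in>F. zmul (c x) x) = 0"
    show "\<forall>x\<in>F. c x = 0"
    proof (cases "C = {}")
      case False
      moreover have "subset.chain ?A C"
        using C by (simp add: chains_alt_def)
      ultimately obtain B where "B \<in> C" "F \<subseteq> B"
        using finite_subset_Union_chain[of F C ?A] F by blast
      moreover have "z_independent B"
        using \<open>B \<in> C\<close> C unfolding chains_def by blast
      ultimately show ?thesis
        using z_independentD[of B F c] F by blast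
    qed (use F in simp)
  qed
  then obtain M where "M \<in> ?A" "\<forall>X\<in>?A. M \<subseteq> X \<longrightarrow> X = M"
    using Zorn_Lemma[of ?A] by blast
  then show ?thesis
    unfolding maximal_independent_def by blast
qed

lemma maximal_independent_multiple_in_span:
  assumes "maximal_independent X"
  shows "\<exists>m c. m \<noteq> 0 \<and> c \<in> fin_supp_on X \<and> zmul m g = lincomb c"
proof (cases "g \<in> X")
  case True
  let ?c = "\<lambda>x. if x = g then 1 else 0::int"
  have "supp ?c = {g}"
    by (auto simp: supp_def)
  then show ?thesis
    using True by (intro exI[of _ 1] exI[of _ ?c]) (simp add: lincomb_def fin_supp_on_def)
next
  case False
  have X: "z_independent X"
    using assms unfolding maximal_independent_def by blast
  have "\<not> z_independent (insert g X)"
    using assms False unfolding maximal_independent_def by blast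
  then obtain F c where F: "finite F" "F \<subseteq> insert g X" "(\<Sum>x\<in>F. zmul (c x) x) = 0"
    and nz: "\<exists>x\<in>F. c x \<noteq> 0"
    unfolding z_independent_def by blast
  let ?F = "F - {g}"
  have FX: "?F \<subseteq> X" "finite ?F"
    using F by auto
  have split: "(if g \<in> F then zmul (c g) g else 0) + (\<Sum>x\<in>?F. zmul (c x) x) = 0"
    using F(1,3) by (cases "g \<in> F") (auto simp: sum.remove)
  have g: "g \<in> F \<and> c g \<noteq> 0"
  proof (rule ccontr)
    assume not_g: "\<not> (g \<in> F \<and> c g \<noteq> 0)"
    then have "(\<Sum>x\<in>?F. zmul (c x) x) = 0"
      using split by (cases "g \<in> F") auto
    then have "\<forall>x\<in>?F. c x = 0"
      using z_independentD[OF X FX(2,1)] by blast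
    then show False
      using nz not_g by auto
  qed
  let ?d = "\<lambda>x. if x \<in> ?F then - c x else 0"
  have d: "?d \<in> fin_supp_on X"
    using FX by (auto simp: fin_supp_on_def supp_def intro: finite_subset[of _ ?F])
  have "lincomb ?d = - (\<Sum>x\<in>?F. zmul (c x) x)"
    using FX by (subst lincomb_eq_sum[of ?F]) (auto simp: supp_def zmul_minus_left sum_negf)
  also have "\<dots> = zmul (c g) g"
    using split g by (simp add: minus_unique add.commute)
  finally show ?thesis
    using g d by (intro exI[of _ "c g"] exI[of _ ?d]) simp
qed

lemma homogeneous_int_system_nontrivial_solution:
  fixes v :: "'b \<Rightarrow> 'c \<Rightarrow> int"
  assumes "finite S" "finite T" "card S < card T"
  shows "\<exists>d. (\<exists>t\<in>T. d t \<noteq> 0) \<and> (\<forall>s\<in>S. (\<Sum>t\<in>T. d t * v t s) = 0)"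
  using assms
proof (induction S arbitrary: T v rule: finite_induct)
  case empty
  then show ?case
    by (intro exI[of _ "\<lambda>_. 1"]) (auto simp: card_gt_0_iff ex_in_conv)
next
  case (insert s S)
  show ?case
  proof (cases "\<forall>t\<in>T. v t s = 0")
    case True
    then show ?thesis
      using insert.IH[of T v] insert.prems insert.hyps by auto
  next
    case False
    then obtain t0 where t0: "t0 \<in> T" "v t0 s \<noteq> 0"
      by auto
    define T' where "T' = T - {t0}"
    \<comment> \<open>Solve equation \<open>s\<close> for the unknown at \<open>t0\<close> and substitute into the others.\<close>
    define w where "w t s' = v t0 s * v t s' - v t s * v t0 s'" for t s'
    have "card S < card T'"
      using insert t0 by (simp add: T'_def)
    then obtain d' where d': "\<exists>t\<in>T'. d' t \<noteq> 0" "\<forall>s'\<in>S. (\<Sum>t\<in>T'. d' t * w t s') = 0"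
      using insert.IH[of T' w] insert.prems by (auto simp: T'_def)
    define d where "d t = (if t = t0 then - (\<Sum>t\<in>T'. d' t * v t s) else v t0 s * d' t)" for t
    have reduce: "(\<Sum>t\<in>T. d t * v t s') = (\<Sum>t\<in>T'. d' t * w t s')" for s'
    proof -
      have "(\<Sum>t\<in>T. d t * v t s') = d t0 * v t0 s' + (\<Sum>t\<in>T'. d t * v t s')"
        using t0 insert.prems by (simp add: T'_def sum.remove)
      also have "(\<Sum>t\<in>T'. d t * v t s') = (\<Sum>t\<in>T'. v t0 s * d' t * v t s')"
        by (rule sum.cong) (auto simp: d_def T'_def)
      finally show ?thesis
        by (simp add: d_def w_def algebra_simps sum_subtractf sum_distrib_left sum_distrib_right)
    qed
    have "\<exists>t\<in>T. d t \<noteq> 0"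
      using d'(1) t0 by (auto simp: d_def T'_def)
    moreover have "\<forall>s'\<in>insert s S. (\<Sum>t\<in>T. d t * v t s') = 0"
      unfolding reduce using d'(2) by (auto simp: w_def)
    ultimately show ?thesis
      by blast
  qed
qed

lemma z_independent_card_le_maximal:
  fixes S T :: "'a::ab_group_add set"
  assumes S: "maximal_independent S" "finite S" and T: "z_independent T" "finite T"
  shows "card T \<le> card S"
proof (rule ccontr)
  assume "\<not> card T \<le> card S"
  then have lt: "card S < card T"
    by simp
  obtain m c where mc: "\<And>t. m t \<noteq> 0" "\<And>t. c t \<in> fin_supp_on S" "\<And>t. zmul (m t) t = lincomb (c t)"
    using maximal_independent_multiple_in_span[OF S(1)] by metis
  obtain d where d: "\<exists>t\<in>T. d t \<noteq> 0" "\<forall>s\<in>S. (\<Sum>t\<in>T. d t * c t s) = 0"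
    using homogeneous_int_system_nontrivial_solution[OF S(2) T(2) lt, of c] by blast
  have "(\<lambda>x. \<Sum>t\<in>T. d t * c t x) = (\<lambda>x. 0)"
  proof
    fix x
    show "(\<Sum>t\<in>T. d t * c t x) = 0"
    proof (cases "x \<in> S")
      case False
      then have "c t x = 0" for t
        using mc(2)[of t] by (auto simp: fin_supp_on_def supp_def)
      then show ?thesis
        by simp
    qed (use d(2) in blast)
  qed
  moreover have fin: "finite (supp (\<lambda>x. d t * c t x))" for t
    using mc(2)[of t] supp_mult_subset[of "d t" "c t"] by (auto simp: fin_supp_on_def intro: finite_subset)
  ultimately have "(\<Sum>t\<in>T. lincomb (\<lambda>x. d t * c t x)) = 0"
    using lincomb_sum[of T "\<lambda>t x. d t * c t x"] T(2) fin by simp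
  moreover have "lincomb (\<lambda>x. d t * c t x) = zmul (d t * m t) t" for t
    using mc(2,3)[of t] by (simp add: lincomb_mult zmul_mult fin_supp_on_def)
  ultimately have "\<forall>t\<in>T. d t * m t = 0"
    using z_independentD[OF T(1) T(2) order_refl, of "\<lambda>t. d t * m t"] by simp
  then show False
    using d(1) mc(1) by auto
qed

section \<open>Groups of finite rank are Bassian\<close>

lemma additive_mod_lincomb:
  assumes N: "subgrp N" and r: "additive_mod N r"
  shows "r (\<Sum>s\<in>A. zmul (k s) s) - (\<Sum>s\<in>A. zmul (k s) (r s)) \<in> N"
    (is "?x - ?v \<in> N")
proof -
  let ?u = "\<Sum>s\<in>A. r (zmul (k s) s)"
  have "?x - ?u \<in> N"
    by (rule additive_mod_sum[OF N r])
  moreover have "?u - ?v \<in> N"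
    unfolding sum_subtractf[symmetric] by (rule subgrp_sum[OF N]) (rule additive_mod_zmul[OF N r])
  ultimately have "(?x - ?u) + (?u - ?v) \<in> N"
    by (rule subgrp_add[OF N])
  then show ?thesis
    by simp
qed

text \<open>The point is that \<open>r\<close> keeps independent sets independent modulo \<open>N\<close>.\<close>

lemma z_independent_insert_image:
  assumes tf: "torsion_free TYPE('a::ab_group_add)"
    and N: "subgrp N" and r: "additive_mod N r" and ker: "\<forall>x. r x \<in> N \<longrightarrow> x = 0"
    and S: "z_independent (S :: 'a set)" and n0: "n0 \<in> N" "n0 \<noteq> 0"
  shows "z_independent (insert n0 (r ` S))"
  unfolding z_independent_def
proof (intro allI impI)
  fix F c assume F: "finite F \<and> F \<subseteq> insert n0 (r ` S) \<and> (\<Sum>x\<in>F. zmul (c x) x) = 0"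
  have "n0 \<notin> r ` S"
    using ker n0(1) z_independent_not_0[OF S] by blast
  define S' where "S' = {s\<in>S. r s \<in> F}"
  have S'_image: "r ` S' = F - {n0}"
    using F \<open>n0 \<notin> r ` S\<close> by (auto simp: S'_def)
  have S'_inj: "inj_on r S'"
    using additive_mod_inj[OF N r ker] by (rule inj_on_subset) simp
  moreover have "finite (r ` S')"
    using F S'_image by simp
  ultimately have S'_fin: "finite S'"
    by (blast dest: finite_imageD)
  have sum_F: "(if n0 \<in> F then zmul (c n0) n0 else 0) + (\<Sum>s\<in>S'. zmul (c (r s)) (r s)) = 0"
  proof -
    have "(\<Sum>x\<in>F. zmul (c x) x) = (if n0 \<in> F then zmul (c n0) n0 else 0) + (\<Sum>x\<in>F - {n0}. zmul (c x) x)"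
      using F by (cases "n0 \<in> F") (auto simp: sum.remove)
    also have "(\<Sum>x\<in>F - {n0}. zmul (c x) x) = (\<Sum>s\<in>S'. zmul (c (r s)) (r s))"
      unfolding S'_image[symmetric] by (rule sum.reindex[OF S'_inj, unfolded comp_def])
    finally show ?thesis
      using F by simp
  qed
  then have "(\<Sum>s\<in>S'. zmul (c (r s)) (r s)) = - (if n0 \<in> F then zmul (c n0) n0 else 0)"
    by (simp add: eq_neg_iff_add_eq_0 add.commute)
  then have "(\<Sum>s\<in>S'. zmul (c (r s)) (r s)) \<in> N"
    using subgrp_zmul[OF N n0(1)] subgrp_minus[OF N] subgrp_0[OF N] by auto
  with additive_mod_lincomb[OF N r, of "\<lambda>s. c (r s)" S'] have "r (\<Sum>s\<in>S'. zmul (c (r s)) s) \<in> N"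
    using subgrp_add[OF N] by fastforce
  then have "(\<Sum>s\<in>S'. zmul (c (r s)) s) = 0"
    using ker by blast
  moreover have "S' \<subseteq> S"
    by (auto simp: S'_def)
  ultimately have c_S': "\<forall>s\<in>S'. c (r s) = 0"
    using z_independentD[OF S S'_fin, where c = "\<lambda>s. c (r s)"] by blast
  have "c n0 = 0" if "n0 \<in> F"
  proof -
    have "zmul (c n0) n0 = 0"
      using sum_F c_S' that by simp
    then show ?thesis
      using torsion_free_zmul_eq_0[OF tf, of "c n0" n0] n0(2) by blast
  qed
  moreover have "c x = 0" if "x \<in> F - {n0}" for x
    using that c_S' unfolding S'_image[symmetric] by blast
  ultimately show "\<forall>x\<in>F. c x = 0"
    by blast
qed

lemma finite_rank_imp_bassian:
  assumes tf: "torsion_free TYPE('a::ab_group_add)" and fr: "finite_rank TYPE('a)"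
  shows "bassian TYPE('a)"
  unfolding bassian_def
proof (intro allI impI)
  fix N :: "'a set"
  assume "subgrp N \<and> (\<exists>f. inj_hom_to_quot f N)"
  then obtain r where N: "subgrp N" and r: "additive_mod N r" and ker: "\<forall>x. r x \<in> N \<longrightarrow> x = 0"
    using ex_inj_hom_to_quot_iff by blast
  obtain S :: "'a set" where S: "finite S" "maximal_independent S"
    using fr finite_rank_iff by blast
  show "N = {0}"
  proof (rule ccontr)
    assume "N \<noteq> {0}"
    then obtain n0 where n0: "n0 \<in> N" "n0 \<noteq> 0"
      using subgrp_0[OF N] by blast
    have "inj_on r S"
      using additive_mod_inj[OF N r ker] by (rule inj_on_subset) simp
    moreover have "n0 \<notin> r ` S"
      using ker n0(1) z_independent_not_0 S(2) unfolding maximal_independent_def by blast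
    ultimately have "card (insert n0 (r ` S)) = Suc (card S)"
      using S(1) by (simp add: card_image)
    moreover have "z_independent (insert n0 (r ` S))"
      using z_independent_insert_image[OF tf N r ker _ n0] S(2) unfolding maximal_independent_def by blast
    ultimately show False
      using z_independent_card_le_maximal[OF S(2,1)] S(1) by fastforce
  qed
qed

section \<open>Groups of infinite rank are not semi-generalized Bassian\<close>

definition qnum :: "rat \<Rightarrow> int" where
  "qnum q = fst (quotient_of q)"

definition qden :: "rat \<Rightarrow> nat" where
  "qden q = nat (snd (quotient_of q))"

lemma qden_pos: "qden q > 0"
  using quotient_of_denom_pos[of q "fst (quotient_of q)" "snd (quotient_of q)"] by (simp add: qden_def)

lemma qnum_div_qden: "of_int (qnum q) / of_nat (qden q) = q"
proof -
  obtain a b where ab: "quotient_of q = (a, b)"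
    by (cases "quotient_of q")
  then show ?thesis
    using quotient_of_div[OF ab] quotient_of_denom_pos[OF ab] by (simp add: qnum_def qden_def)
qed

text \<open>\<open>X\<close> is a maximal independent set, split by \<open>\<beta>\<close> into countably many copies of itself.
  Sending \<open>\<beta> (b, k)\<close> to \<open>e\<^sub>b / (k + 1)\<close> maps the free group \<open>\<langle>X\<rangle>\<close> onto the \<open>\<rat>\<close>-vector space
  \<open>V\<close> with basis \<open>X\<close>; its kernel \<open>qker\<close> gives \<open>G \<subseteq> V \<cong> \<langle>X\<rangle>/qker \<subseteq> G/qker\<close>. Elements of \<open>V\<close> are
  finitely supported functions \<open>X \<Rightarrow> \<rat>\<close>, elements of \<open>\<langle>X\<rangle>\<close> integer coefficient functions.\<close>

locale infinite_rank_quotient =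
  fixes X :: "'a::ab_group_add set" and \<beta> :: "'a \<times> nat \<Rightarrow> 'a"
  assumes maximal_X: "maximal_independent X"
    and torsion_free: "torsion_free TYPE('a)"
    and inj_\<beta>: "inj_on \<beta> (X \<times> UNIV)" and range_\<beta>: "\<beta> ` (X \<times> UNIV) \<subseteq> X"
begin

lemma independent_X: "z_independent X"
  using maximal_X by (simp add: maximal_independent_def)

lemma \<beta>_eq_iff: "a \<in> X \<Longrightarrow> b \<in> X \<Longrightarrow> \<beta> (a, k) = \<beta> (b, l) \<longleftrightarrow> a = b \<and> k = l"
  using inj_\<beta> by (auto simp: inj_on_def)

definition qcoord :: "'a \<Rightarrow> ('a \<Rightarrow> int) \<Rightarrow> rat" where
  "qcoord b n = (\<Sum>k\<in>{k. n (\<beta> (b, k)) \<noteq> 0}. of_int (n (\<beta> (b, k))) / of_nat (Suc k))"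

lemma finite_qcoord_support:
  assumes "b \<in> X" "finite (supp n)"
  shows "finite {k. n (\<beta> (b, k)) \<noteq> 0}"
proof -
  have "inj (\<lambda>k. \<beta> (b, k))"
    using assms(1) \<beta>_eq_iff by (auto intro: injI)
  moreover have "{k. n (\<beta> (b, k)) \<noteq> 0} = (\<lambda>k. \<beta> (b, k)) -` supp n"
    by (auto simp: supp_def)
  ultimately show ?thesis
    using finite_vimageI[OF assms(2)] by simp
qed

lemma qcoord_eq_sum:
  assumes "finite K" "{k. n (\<beta> (b, k)) \<noteq> 0} \<subseteq> K"
  shows "qcoord b n = (\<Sum>k\<in>K. of_int (n (\<beta> (b, k))) / of_nat (Suc k))"
  unfolding qcoord_def by (rule sum.mono_neutral_left) (use assms in auto)

lemma qcoord_add: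
  assumes "b \<in> X" "finite (supp n)" "finite (supp m)"
  shows "qcoord b (\<lambda>x. n x + m x) = qcoord b n + qcoord b m"
proof -
  let ?K = "{k. n (\<beta> (b, k)) \<noteq> 0} \<union> {k. m (\<beta> (b, k)) \<noteq> 0}"
  have K: "finite ?K"
    using finite_qcoord_support assms by auto
  have "qcoord b (\<lambda>x. n x + m x) = (\<Sum>k\<in>?K. of_int (n (\<beta> (b, k)) + m (\<beta> (b, k))) / of_nat (Suc k))"
    by (rule qcoord_eq_sum[OF K]) auto
  also have "\<dots> = (\<Sum>k\<in>?K. of_int (n (\<beta> (b, k))) / of_nat (Suc k))
      + (\<Sum>k\<in>?K. of_int (m (\<beta> (b, k))) / of_nat (Suc k))"
    by (simp add: sum.distrib add_divide_distrib)
  also have "\<dots> = qcoord b n + qcoord b m"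
    using qcoord_eq_sum[OF K, of n b] qcoord_eq_sum[OF K, of m b] by auto
  finally show ?thesis .
qed

lemma qcoord_mult:
  assumes "b \<in> X" "finite (supp n)"
  shows "qcoord b (\<lambda>x. c * n x) = of_int c * qcoord b n"
proof -
  have "qcoord b (\<lambda>x. c * n x) = (\<Sum>k\<in>{k. n (\<beta> (b, k)) \<noteq> 0}. of_int (c * n (\<beta> (b, k))) / of_nat (Suc k))"
    using finite_qcoord_support[OF assms] by (intro qcoord_eq_sum) auto
  then show ?thesis
    unfolding qcoord_def by (simp add: sum_distrib_left)
qed

lemma qcoord_diff:
  assumes "b \<in> X" "finite (supp n)" "finite (supp m)"
  shows "qcoord b (\<lambda>x. n x - m x) = qcoord b n - qcoord b m"
proof -
  have "finite (supp (\<lambda>x. - 1 * m x))"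
    using assms(3) supp_mult_subset[of "- 1" m] by (blast intro: finite_subset)
  then show ?thesis
    using qcoord_add[OF assms(1,2), of "\<lambda>x. - 1 * m x"] qcoord_mult[OF assms(1,3), of "- 1"] by simp
qed

text \<open>A preimage of \<open>w\<close> under \<open>qcoord\<close>: the coordinate \<open>p/q\<close> of \<open>w\<close> at \<open>a\<close> is realised by the
  coefficient \<open>p\<close> at \<open>\<beta> (a, q - 1)\<close>.\<close>

definition realize :: "('a \<Rightarrow> rat) \<Rightarrow> 'a \<Rightarrow> int" where
  "realize w y = (\<Sum>a\<in>supp w. if y = \<beta> (a, qden (w a) - 1) then qnum (w a) else 0)"

lemma realize_fin_supp:
  assumes "w \<in> fin_supp_on X"
  shows "realize w \<in> fin_supp_on X"
proof -
  have "supp (realize w) \<subseteq> (\<lambda>a. \<beta> (a, qden (w a) - 1)) ` supp w"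
  proof
    fix y assume "y \<in> supp (realize w)"
    then obtain a where "a \<in> supp w" "(if y = \<beta> (a, qden (w a) - 1) then qnum (w a) else 0) \<noteq> 0"
      unfolding supp_def[of "realize w"] realize_def by (blast dest: sum.not_neutral_contains_not_neutral)
    then show "y \<in> (\<lambda>a. \<beta> (a, qden (w a) - 1)) ` supp w"
      by (auto split: if_splits)
  qed
  moreover have "(\<lambda>a. \<beta> (a, qden (w a) - 1)) ` supp w \<subseteq> X"
    using assms range_\<beta> by (auto simp: fin_supp_on_def)
  ultimately show ?thesis
    using assms by (auto simp: fin_supp_on_def intro: finite_subset)
qed

lemma realize_\<beta>:
  assumes "w \<in> fin_supp_on X" "b \<in> X"
  shows "realize w (\<beta> (b, k)) = (if b \<in> supp w \<and> k = qden (w b) - 1 then qnum (w b) else 0)"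
proof -
  have "realize w (\<beta> (b, k)) = (\<Sum>a\<in>supp w. if a = b then (if k = qden (w b) - 1 then qnum (w b) else 0) else 0)"
    unfolding realize_def
  proof (rule sum.cong)
    fix a assume "a \<in> supp w"
    then have "a \<in> X"
      using assms by (auto simp: fin_supp_on_def)
    then show "(if \<beta> (b, k) = \<beta> (a, qden (w a) - 1) then qnum (w a) else 0) =
        (if a = b then (if k = qden (w b) - 1 then qnum (w b) else 0) else 0)"
      using \<beta>_eq_iff[OF assms(2) \<open>a \<in> X\<close>] by auto
  qed simp
  then show ?thesis
    using assms by (simp add: sum.delta' fin_supp_on_def)
qed

lemma qcoord_realize:
  assumes "w \<in> fin_supp_on X" "b \<in> X"
  shows "qcoord b (realize w) = w b"
proof (cases "b \<in> supp w")
  case True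
  have "qcoord b (realize w) = (\<Sum>k\<in>{qden (w b) - 1}. of_int (realize w (\<beta> (b, k))) / of_nat (Suc k))"
    by (rule qcoord_eq_sum) (use realize_\<beta>[OF assms] in auto)
  also have "\<dots> = w b"
    using realize_\<beta>[OF assms] True qnum_div_qden[of "w b"] qden_pos[of "w b"] by simp
  finally show ?thesis .
next
  case False
  then show ?thesis
    using realize_\<beta>[OF assms] by (simp add: qcoord_def supp_def)
qed

definition qker :: "'a set" where
  "qker = lincomb ` {n \<in> fin_supp_on X. \<forall>b\<in>X. qcoord b n = 0}"

lemma lincomb_in_qker_iff:
  assumes "n \<in> fin_supp_on X"
  shows "lincomb n \<in> qker \<longleftrightarrow> (\<forall>b\<in>X. qcoord b n = 0)"
  using z_independent_lincomb_inj[OF independent_X assms] assms unfolding qker_def by blast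

lemma subgrp_qker: "subgrp qker"
  unfolding subgrp_def
proof (intro conjI ballI)
  show "0 \<in> qker"
    using lincomb_in_qker_iff[of "\<lambda>x. 0"] by (simp add: qcoord_def)
next
  fix x y assume "x \<in> qker" "y \<in> qker"
  then obtain n m where nm: "n \<in> fin_supp_on X" "m \<in> fin_supp_on X" "x = lincomb n" "y = lincomb m"
    and q: "\<forall>b\<in>X. qcoord b n = 0" "\<forall>b\<in>X. qcoord b m = 0"
    unfolding qker_def by blast
  then have "x + y = lincomb (\<lambda>z. n z + m z)"
    by (simp add: lincomb_add fin_supp_on_def)
  also have "\<dots> \<in> qker"
    using lincomb_in_qker_iff[OF fin_supp_on_add[OF nm(1,2)]] qcoord_add nm q
    by (simp add: fin_supp_on_def)
  finally show "x + y \<in> qker" .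
next
  fix x assume "x \<in> qker"
  then obtain n where n: "n \<in> fin_supp_on X" "x = lincomb n" "\<forall>b\<in>X. qcoord b n = 0"
    unfolding qker_def by blast
  then have "- x = lincomb (\<lambda>z. - 1 * n z)"
    using lincomb_mult[of n "- 1"] by (simp add: fin_supp_on_def zmul_minus_left)
  also have "\<dots> \<in> qker"
    using lincomb_in_qker_iff[OF fin_supp_on_mult[OF n(1), of "- 1"]] qcoord_mult[where c = "- 1"] n
    by (simp add: fin_supp_on_def)
  finally show "- x \<in> qker" .
qed

definition embed :: "('a \<Rightarrow> rat) \<Rightarrow> 'a" where
  "embed w = lincomb (realize w)"

lemma embed_add:
  assumes "w \<in> fin_supp_on X" "w' \<in> fin_supp_on X"
  shows "embed w + embed w' - embed (\<lambda>x. w x + w' x) \<in> qker"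
proof -
  let ?w = "\<lambda>x. w x + w' x"
  note r = realize_fin_supp[OF assms(1)] realize_fin_supp[OF assms(2)]
    realize_fin_supp[OF fin_supp_on_add[OF assms]]
  have "embed w + embed w' - embed ?w = lincomb (\<lambda>x. (realize w x + realize w' x) - realize ?w x)"
    using r by (simp add: embed_def lincomb_add lincomb_diff fin_supp_on_def supp_add_subset
        finite_subset[OF supp_add_subset])
  moreover have "(\<lambda>x. (realize w x + realize w' x) - realize ?w x) \<in> fin_supp_on X"
    using r by (intro fin_supp_on_diff fin_supp_on_add)
  ultimately show ?thesis
    using lincomb_in_qker_iff r assms fin_supp_on_add[OF assms]
    by (simp add: qcoord_diff qcoord_add qcoord_realize fin_supp_on_def finite_subset[OF supp_add_subset])
qed

lemma embed_zmul:
  assumes "w \<in> fin_supp_on X"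
  shows "zmul k (embed w) - embed (\<lambda>x. of_int k * w x) \<in> qker"
proof -
  let ?w = "\<lambda>x. of_int k * w x"
  note r = realize_fin_supp[OF assms] realize_fin_supp[OF fin_supp_on_mult[OF assms]]
  have "zmul k (embed w) - embed ?w = lincomb (\<lambda>x. k * realize w x - realize ?w x)"
    using r by (simp add: embed_def lincomb_mult lincomb_diff fin_supp_on_def
        finite_subset[OF supp_mult_subset])
  moreover have "(\<lambda>x. k * realize w x - realize ?w x) \<in> fin_supp_on X"
    using r by (intro fin_supp_on_diff fin_supp_on_mult)
  ultimately show ?thesis
    using lincomb_in_qker_iff r assms fin_supp_on_mult[OF assms]
    by (simp add: qcoord_diff qcoord_mult qcoord_realize fin_supp_on_def finite_subset[OF supp_mult_subset])
qed

lemma embed_0: "embed (\<lambda>x. 0) = 0"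
proof -
  have "realize (\<lambda>x. 0) = (\<lambda>y. 0)"
    by (simp add: realize_def supp_def fun_eq_iff)
  then show ?thesis
    by (simp add: embed_def)
qed

lemma embed_in_qker_iff: "w \<in> fin_supp_on X \<Longrightarrow> embed w \<in> qker \<longleftrightarrow> (\<forall>b\<in>X. w b = 0)"
  using lincomb_in_qker_iff[OF realize_fin_supp] qcoord_realize by (simp add: embed_def)

text \<open>Coordinates of \<open>g\<close> in \<open>V\<close>: if \<open>m g = \<Sum> c\<^sub>x x\<close>, they are \<open>c\<^sub>x / m\<close>.\<close>

definition hull_coords :: "'a \<Rightarrow> 'a \<Rightarrow> rat" where
  "hull_coords g = (SOME u. \<exists>m c. m \<noteq> 0 \<and> c \<in> fin_supp_on X \<and> zmul m g = lincomb c \<and>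
      u = (\<lambda>x. of_int (c x) / of_int m))"

lemma hull_coords_ex:
  "\<exists>m c. m \<noteq> 0 \<and> c \<in> fin_supp_on X \<and> zmul m g = lincomb c \<and> hull_coords g = (\<lambda>x. of_int (c x) / of_int m)"
proof -
  obtain m c where "m \<noteq> 0" "c \<in> fin_supp_on X" "zmul m g = lincomb c"
    using maximal_independent_multiple_in_span[OF maximal_X] by blast
  then have "\<exists>u m c. m \<noteq> 0 \<and> c \<in> fin_supp_on X \<and> zmul m g = lincomb c \<and> u = (\<lambda>x. of_int (c x) / of_int m)"
    by blast
  from someI_ex[OF this] show ?thesis
    unfolding hull_coords_def .
qed

lemma ratios_eq_iff:
  assumes "m \<noteq> 0" "c \<in> fin_supp_on X" "zmul m g = lincomb c"
    and "m' \<noteq> 0" "c' \<in> fin_supp_on X" "zmul m' h = lincomb c'"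
  shows "(\<lambda>x. of_int (c x) / of_int m) = (\<lambda>x. of_int (c' x) / (of_int m' :: rat))
     \<longleftrightarrow> zmul (m * m') g = zmul (m * m') h"
proof -
  have "zmul (m * m') g = lincomb (\<lambda>x. m' * c x)"
    using assms(2,3) zmul_mult[of m' m g] by (simp add: mult.commute lincomb_mult fin_supp_on_def)
  moreover have "zmul (m * m') h = lincomb (\<lambda>x. m * c' x)"
    using assms(5,6) by (simp add: zmul_mult lincomb_mult fin_supp_on_def)
  moreover have "(\<lambda>x. of_int (c x) / of_int m) = (\<lambda>x. of_int (c' x) / (of_int m' :: rat))
      \<longleftrightarrow> (\<lambda>x. m' * c x) = (\<lambda>x. m * c' x)"
  proof -
    have "of_int (c x) / of_int m = of_int (c' x) / (of_int m' :: rat) \<longleftrightarrow> m' * c x = m * c' x" for x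
    proof -
      have "of_int (c x) / of_int m = of_int (c' x) / (of_int m' :: rat) \<longleftrightarrow>
          of_int (m' * c x) = (of_int (m * c' x) :: rat)"
        using assms(1,4) by (simp add: frac_eq_eq mult.commute)
      then show ?thesis
        by (simp only: of_int_eq_iff)
    qed
    then show ?thesis
      by (simp add: fun_eq_iff)
  qed
  moreover have "lincomb (\<lambda>x. m' * c x) = lincomb (\<lambda>x. m * c' x) \<longleftrightarrow> (\<lambda>x. m' * c x) = (\<lambda>x. m * c' x)"
    using z_independent_lincomb_inj[OF independent_X fin_supp_on_mult[OF assms(2)] fin_supp_on_mult[OF assms(5)]]
    by auto
  ultimately show ?thesis
    by simp
qed

lemma hull_coords_eq:
  assumes "m \<noteq> 0" "c \<in> fin_supp_on X" "zmul m g = lincomb c"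
  shows "hull_coords g = (\<lambda>x. of_int (c x) / of_int m)"
proof -
  obtain m' c' where r': "m' \<noteq> 0" "c' \<in> fin_supp_on X" "zmul m' g = lincomb c'"
    and eq: "hull_coords g = (\<lambda>x. of_int (c' x) / of_int m')"
    using hull_coords_ex by blast
  then show ?thesis
    using ratios_eq_iff[OF r' assms] by simp
qed

lemma hull_coords_fin_supp: "hull_coords g \<in> fin_supp_on X"
proof -
  obtain m c where "m \<noteq> 0" "c \<in> fin_supp_on X" "hull_coords g = (\<lambda>x. of_int (c x) / of_int m)"
    using hull_coords_ex by blast
  moreover from this have "supp (hull_coords g) = supp c"
    by (auto simp: supp_def)
  ultimately show ?thesis
    by (simp add: fin_supp_on_def)
qed

lemma hull_coords_inj:
  assumes "hull_coords g = hull_coords h"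
  shows "g = h"
proof -
  obtain m c where r: "m \<noteq> 0" "c \<in> fin_supp_on X" "zmul m g = lincomb c"
    "hull_coords g = (\<lambda>x. of_int (c x) / of_int m)"
    using hull_coords_ex by blast
  obtain m' c' where r': "m' \<noteq> 0" "c' \<in> fin_supp_on X" "zmul m' h = lincomb c'"
    "hull_coords h = (\<lambda>x. of_int (c' x) / of_int m')"
    using hull_coords_ex by blast
  have "zmul (m * m') (g - h) = 0"
    using ratios_eq_iff[OF r(1-3) r'(1-3)] assms r(4) r'(4) by (simp add: zmul_diff_right)
  then have "g - h = 0"
    using torsion_free_zmul_eq_0[OF torsion_free, of "m * m'" "g - h"] r(1) r'(1) by simp
  then show ?thesis
    by simp
qed

lemma hull_coords_add: "hull_coords (g + h) = (\<lambda>x. hull_coords g x + hull_coords h x)"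
proof -
  obtain m c where r: "m \<noteq> 0" "c \<in> fin_supp_on X" "zmul m g = lincomb c"
    "hull_coords g = (\<lambda>x. of_int (c x) / of_int m)"
    using hull_coords_ex by blast
  obtain m' c' where r': "m' \<noteq> 0" "c' \<in> fin_supp_on X" "zmul m' h = lincomb c'"
    "hull_coords h = (\<lambda>x. of_int (c' x) / of_int m')"
    using hull_coords_ex by blast
  let ?c = "\<lambda>x. m' * c x + m * c' x"
  have c: "?c \<in> fin_supp_on X"
    using r(2) r'(2) by (intro fin_supp_on_add fin_supp_on_mult)
  have "zmul (m * m') (g + h) = zmul m' (zmul m g) + zmul m (zmul m' h)"
    using zmul_mult[of m' m g] zmul_mult[of m m' h] by (simp add: zmul_add_right mult.commute)
  also have "\<dots> = lincomb ?c"
    using r(2,3) r'(2,3) fin_supp_on_mult[OF r(2), of m'] fin_supp_on_mult[OF r'(2), of m]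
    by (simp add: lincomb_mult lincomb_add fin_supp_on_def)
  finally have "hull_coords (g + h) = (\<lambda>x. of_int (?c x) / of_int (m * m'))"
    using hull_coords_eq[OF _ c, of "m * m'" "g + h"] r(1) r'(1) by simp
  also have "\<dots> = (\<lambda>x. of_int (c x) / of_int m + of_int (c' x) / of_int m')"
    using r(1) r'(1) by (simp add: fun_eq_iff field_simps)
  finally show ?thesis
    using r(4) r'(4) by simp
qed

lemma hull_coords_0: "hull_coords 0 = (\<lambda>x. 0)"
  using hull_coords_eq[of 1 "\<lambda>x. 0" 0] by simp

lemma ex_inj_hom_to_quot_qker: "\<exists>f. inj_hom_to_quot f qker"
  unfolding ex_inj_hom_to_quot_iff[OF subgrp_qker]
proof (intro exI[of _ "\<lambda>g. embed (hull_coords g)"] conjI allI impI)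
  show "additive_mod qker (\<lambda>g. embed (hull_coords g))"
    unfolding additive_mod_def
  proof (intro allI)
    fix g h
    have "embed (hull_coords g) + embed (hull_coords h) - embed (hull_coords (g + h)) \<in> qker"
      using embed_add[OF hull_coords_fin_supp hull_coords_fin_supp] by (simp add: hull_coords_add)
    then show "embed (hull_coords (g + h)) - (embed (hull_coords g) + embed (hull_coords h)) \<in> qker"
      using subgrp_minus[OF subgrp_qker] by fastforce
  qed
next
  fix g assume "embed (hull_coords g) \<in> qker"
  then have "\<forall>b\<in>X. hull_coords g b = 0"
    using embed_in_qker_iff[OF hull_coords_fin_supp] by simp
  then have "hull_coords g = hull_coords 0"
    using hull_coords_fin_supp[of g] by (auto simp: hull_coords_0 fin_supp_on_def supp_def)
  then show "g = 0"
    by (rule hull_coords_inj)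
qed

lemma divisible_image_embed:
  assumes p_add: "\<And>x y. p (x + y) = p x + p y" and p_qker: "\<And>x. x \<in> qker \<Longrightarrow> p x = 0"
  shows "divisible_subgrp ((\<lambda>w. p (embed w)) ` fin_supp_on X)"
proof -
  have p_cong: "p x = p y" if "x - y \<in> qker" for x y
    using p_qker[OF that] p_add[of "x - y" y] by simp
  have p_embed_add: "p (embed w) + p (embed w') = p (embed (\<lambda>x. w x + w' x))"
    if "w \<in> fin_supp_on X" "w' \<in> fin_supp_on X" for w w'
    using p_cong[OF embed_add[OF that]] p_add by simp
  have p_embed_zmul: "zmul k (p (embed w)) = p (embed (\<lambda>x. of_int k * w x))"
    if "w \<in> fin_supp_on X" for w k
    using p_cong[OF embed_zmul[OF that]] additive_zmul[of p] p_add by simp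
  define D where "D = (\<lambda>w. p (embed w)) ` fin_supp_on X"
  have "p 0 = 0"
    using p_add[of 0 0] by simp
  then have "0 \<in> D"
    unfolding D_def by (intro image_eqI[where x = "\<lambda>x. 0"]) (simp_all add: embed_0)
  moreover have "x + y \<in> D" if "x \<in> D" "y \<in> D" for x y
    using that p_embed_add fin_supp_on_add unfolding D_def by (auto intro!: image_eqI)
  moreover have "- x \<in> D" if "x \<in> D" for x
  proof -
    have "zmul (- 1) x \<in> D"
      using that p_embed_zmul fin_supp_on_uminus unfolding D_def by (auto intro!: image_eqI)
    then show ?thesis
      by (simp add: zmul_minus_left)
  qed
  moreover have "\<exists>y\<in>D. zmul (int n) y = x" if "x \<in> D" "n > 0" for x n
  proof -
    obtain w where w: "w \<in> fin_supp_on X" "x = p (embed w)"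
      using \<open>x \<in> D\<close> unfolding D_def by blast
    let ?w = "\<lambda>z. (1 / of_nat n) * w z"
    have "zmul (int n) (p (embed ?w)) = x"
      using p_embed_zmul[OF fin_supp_on_mult[OF w(1), of "1 / of_nat n"], of "int n"] \<open>n > 0\<close> w(2)
      by simp
    then show ?thesis
      unfolding D_def using fin_supp_on_mult[OF w(1)] by blast
  qed
  ultimately show ?thesis
    unfolding D_def divisible_subgrp_def subgrp_def by blast
qed

text \<open>Since \<open>\<langle>X\<rangle>/qker\<close> is divisible, the projection onto a complement of a summand containing
  \<open>qker\<close> kills it when \<open>G\<close> is reduced.\<close>

lemma embed_in_summand:
  assumes red: "reduced TYPE('a)" and S: "direct_summand S" "qker \<subseteq> S" and w: "w \<in> fin_supp_on X"
  shows "embed w \<in> S"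
proof -
  obtain p where p_add: "\<And>x y. p (x + y) = p x + p y" and p_S: "\<And>s. s \<in> S \<Longrightarrow> p s = 0"
    and p_proj: "\<And>x. x - p x \<in> S"
    using direct_summand_projection[OF S(1)] by blast
  have "(\<lambda>w. p (embed w)) ` fin_supp_on X = {0}"
    using divisible_image_embed[OF p_add] p_S S(2) red unfolding reduced_def by blast
  then have "p (embed w) = 0"
    using w by blast
  then show ?thesis
    using p_proj[of "embed w"] by simp
qed

lemma not_semi_gen_bassian:
  assumes red: "reduced TYPE('a)" and "X \<noteq> {}"
  shows "\<not> semi_gen_bassian TYPE('a)"
proof
  assume "semi_gen_bassian TYPE('a)"
  then obtain S where S: "direct_summand S" and ess: "essential_in qker S"
    using subgrp_qker ex_inj_hom_to_quot_qker unfolding semi_gen_bassian_def by blast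
  obtain a where a: "a \<in> X"
    using assms(2) by blast
  define e where "e x = (if x = a then 1 else 0 :: rat)" for x
  have e: "e \<in> fin_supp_on X"
    using a by (simp add: e_def fin_supp_on_def supp_def)
  have "embed e \<in> S"
    using embed_in_summand[OF red S _ e] ess by (simp add: essential_in_def)
  then have "range (\<lambda>k. zmul k (embed e)) \<subseteq> S"
    using subgrp_zmul S unfolding direct_summand_def by blast
  moreover have "embed e \<noteq> 0"
    using embed_in_qker_iff[OF e] subgrp_0[OF subgrp_qker] a by (auto simp: e_def)
  moreover have "embed e \<in> range (\<lambda>k. zmul k (embed e))"
    by (rule range_eqI[of _ _ 1]) simp
  ultimately have "qker \<inter> range (\<lambda>k. zmul k (embed e)) \<noteq> {0}"
    using ess subgrp_zmul_range unfolding essential_in_def by blast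
  then obtain z where "z \<in> qker" "z \<in> range (\<lambda>k. zmul k (embed e))" "z \<noteq> 0"
    using subgrp_0[OF subgrp_qker] subgrp_0[OF subgrp_zmul_range] by blast
  then obtain k where k: "zmul k (embed e) \<in> qker" "zmul k (embed e) \<noteq> 0"
    by blast
  have "zmul k (embed e) - (zmul k (embed e) - embed (\<lambda>x. of_int k * e x)) \<in> qker"
    using subgrp_diff[OF subgrp_qker k(1) embed_zmul[OF e]] .
  then have "embed (\<lambda>x. of_int k * e x) \<in> qker"
    by simp
  then have "of_int k * e a = 0"
    using embed_in_qker_iff[OF fin_supp_on_mult[OF e]] a by blast
  then have "k = 0"
    by (simp add: e_def)
  then show False
    using k(2) by simp
qed

end

lemma ex_inj_times_nat_into:
  includes cardinal_syntax
  assumes "infinite (X :: 'a set)"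
  shows "\<exists>\<beta>::'a \<times> nat \<Rightarrow> 'a. inj_on \<beta> (X \<times> UNIV) \<and> \<beta> ` (X \<times> UNIV) \<subseteq> X"
proof -
  have "|UNIV :: nat set| \<le>o |X|"
    using infinite_iff_card_of_nat assms by blast
  then have "|X \<times> (UNIV :: nat set)| =o |X|"
    using card_of_Times_infinite[OF assms] by blast
  then have "|X \<times> (UNIV :: nat set)| \<le>o |X|"
    using ordIso_iff_ordLeq by blast
  then show ?thesis
    using card_of_ordLeq by blast
qed

lemma semi_gen_bassian_imp_finite_rank:
  assumes red: "reduced TYPE('a::ab_group_add)" and tf: "torsion_free TYPE('a)"
    and sgb: "semi_gen_bassian TYPE('a)"
  shows "finite_rank TYPE('a)"
proof -
  obtain X :: "'a set" where X: "maximal_independent X"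
    using ex_maximal_independent by blast
  have "finite X"
  proof (rule ccontr)
    assume "infinite X"
    then obtain \<beta> :: "'a \<times> nat \<Rightarrow> 'a" where "inj_on \<beta> (X \<times> UNIV)" "\<beta> ` (X \<times> UNIV) \<subseteq> X"
      using ex_inj_times_nat_into by blast
    then interpret infinite_rank_quotient X \<beta>
      using X tf by unfold_locales
    show False
      using not_semi_gen_bassian[OF red] sgb \<open>infinite X\<close> by auto
  qed
  then show ?thesis
    using X finite_rank_iff by blast
qed

lemma bassian_imp_semi_gen_bassian:
  assumes "bassian TYPE('a::ab_group_add)"
  shows "semi_gen_bassian TYPE('a)"
  unfolding semi_gen_bassian_def
proof (intro allI impI)
  fix H :: "'a set"
  assume "subgrp H \<and> (\<exists>f. inj_hom_to_quot f H)"
  then have "H = {0}"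
    using assms unfolding bassian_def by blast
  then have "direct_summand H" "essential_in H H"
    unfolding direct_summand_def essential_in_def subgrp_def by (auto intro: exI[of _ UNIV])
  then show "\<exists>S. direct_summand S \<and> essential_in H S"
    by blast
qed

theorem proposition2p6:
  assumes "reduced TYPE('a::ab_group_add)" and "torsion_free TYPE('a)"
  shows "(semi_gen_bassian TYPE('a) \<longleftrightarrow> bassian TYPE('a)) \<and>
         (bassian TYPE('a) \<longleftrightarrow> finite_rank TYPE('a))"
  using bassian_imp_semi_gen_bassian[where 'a = 'a] semi_gen_bassian_imp_finite_rank[OF assms]
    finite_rank_imp_bassian[OF assms(2)] by blast

end
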